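(* In the setting below, let $n,k\in\mathbb{Z}$ and $0<\alpha\le1$. Then $-n\lhd0\lhd k\lhd n$ over $I_\alpha$ if and only if $-n\lhd -k\lhd0\lhd n$ over $I_\alpha$. In particular, if $n$ is a closest return time with respect to $I_\alpha$, then so is $-n$.
   Context: $\mathbb{T}^1=\mathbb{R}/\mathbb{Z}$, $\omega\in[0,1)$ irrational, $T(\theta,x)=(\theta+\omega,T_\theta(x))$ a continuous map of $\mathbb{T}^2$, homotopic to the identity, with orientation-preserving homeomorphic fibre maps. Let $W=I\times K$ with $I,K\subset\mathbb{T}^1$ open intervals, $|I|<\tfrac12$, $I=(-|I|/2,|I|/2)$ centred at $0$, and $W$ wandering: $T^n(W)\cap W=\emptyset$ for all $n\in\mathbb{N}$. For $0<\alpha\le1$, $I_\alpha:=(-\alpha|I|/2,\alpha|I|/2)$. For $A\subseteq\mathbb{T}^2$, $A_\theta:=\{x:(\theta,x)\in A\}$. Integers $n_1,\dots,n_k$ are comparable over an interval $J$ if $J\subseteq\bigcap_{i=1}^k(I+n_i\omega)$. For $k\ge3$, "$n_1\lhd\dots\lhd n_k$ over $J$" means $n_1,\dots,n_k$ are comparable over $J$ and for all $\theta\in J$ and all $x_i\in(T^{n_i}W)_\theta$ the points $x_1,x_2,\dots,x_k$ lie in this cyclic (counterclockwise) order on the circle. $N(\alpha):=\{n\in\mathbb{Z}:n\text{ comparable over }I_\alpha\}=\{n:|n\omega\bmod1|\le\frac{1-\alpha}{2}|I|\}$. $n\in N(\alpha)$ is a closest return time (w.r.t. $I_\alpha$) if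 either ($-n\lhd0\lhd n$ over $I_\alpha$ and there is no $k\in N(\alpha)\setminus\{0\}$ with $|k|<|n|$ and $0\lhd k\lhd n$ over $I_\alpha$) or ($n\lhd0\lhd-n$ over $I_\alpha$ and there is no $k\in N(\alpha)\setminus\{0\}$ with $|k|<|n|$ and $n\lhd k\lhd0$ over $I_\alpha$). *)

theory Defs
  imports "HOL-Analysis.Analysis"
begin

(* Conventions: the circle T^1 = R/Z is represented by real lifts; a point of T^1 is any
   real number, two reals denoting the same point iff they differ by an integer.
   Subsets of T^1 / T^2 are represented by Z- resp. Z^2-periodic predicates on lifts.
   The skew product T(theta,x) = (theta+omega, T_theta(x)), homotopic to the identity with
   orientation-preserving homeomorphic fibre maps, is represented by a continuous lift
   F : R x R -> R with F (theta+1) x = F theta x, F theta (x+1) = F theta x + 1 and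
   F theta strictly increasing, i.e. T(theta,x) = (theta+omega, F theta x) mod Z^2. *)

definition mod1_eq :: "real \<Rightarrow> real \<Rightarrow> bool" where
  "mod1_eq x y \<longleftrightarrow> (\<exists>j::int. x = y + of_int j)"

text \<open>W = I x K with I = (-L/2, L/2) (so |I| = L) and K = (a, a+M) (so |K| = M), mod Z^2.\<close>
definition inW :: "real \<Rightarrow> real \<Rightarrow> real \<Rightarrow> real \<Rightarrow> real \<Rightarrow> bool" where
  "inW L a M \<theta> x \<longleftrightarrow>
     (\<exists>i::int. \<bar>\<theta> - of_int i\<bar> < L / 2) \<and> (\<exists>j::int. a < x - of_int j \<and> x - of_int j < a + M)"

text \<open>Fibre component of the lift of T^n: T^n(theta,x) = (theta + n omega, iter_lift F omega n theta x).\<close>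
fun iter_lift :: "(real \<Rightarrow> real \<Rightarrow> real) \<Rightarrow> real \<Rightarrow> nat \<Rightarrow> real \<Rightarrow> real \<Rightarrow> real" where
  "iter_lift F \<omega> 0 \<theta> x = x"
| "iter_lift F \<omega> (Suc n) \<theta> x = F (\<theta> + real n * \<omega>) (iter_lift F \<omega> n \<theta> x)"

text \<open>(theta,x) in T^m(W), for m an integer (negative m: preimage under T^|m|).\<close>
definition inTW :: "(real \<Rightarrow> real \<Rightarrow> real) \<Rightarrow> real \<Rightarrow> real \<Rightarrow> real \<Rightarrow> real \<Rightarrow> int \<Rightarrow> real \<Rightarrow> real \<Rightarrow> bool" where
  "inTW F \<omega> L a M m \<theta> x \<longleftrightarrow>
     (if 0 \<le> m then
        (\<exists>\<theta>0 x0. inW L a M \<theta>0 x0 \<and> mod1_eq (\<theta>0 + of_int m * \<omega>) \<theta>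
                 \<and> mod1_eq (iter_lift F \<omega> (nat m) \<theta>0 x0) x)
      else inW L a M (\<theta> + real (nat (-m)) * \<omega>) (iter_lift F \<omega> (nat (-m)) \<theta> x))"

definition Ialpha :: "real \<Rightarrow> real \<Rightarrow> real set" where
  "Ialpha L \<alpha> = {- \<alpha> * L / 2 <..< \<alpha> * L / 2}"

text \<open>n_1,...,n_k comparable over J: J is contained in every I + n_i omega.\<close>
definition comparable :: "real \<Rightarrow> real \<Rightarrow> int list \<Rightarrow> real set \<Rightarrow> bool" where
  "comparable \<omega> L ns J \<longleftrightarrow>
     (\<forall>\<theta>\<in>J. \<forall>n\<in>set ns. \<exists>i::int. \<bar>\<theta> - of_int n * \<omega> - of_int i\<bar> < L / 2)"

definition cyc_order :: "real list \<Rightarrow> bool" where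
  "cyc_order xs \<longleftrightarrow>
     (\<exists>ys. length ys = length xs \<and> (\<forall>i<length xs. mod1_eq (ys ! i) (xs ! i))
        \<and> sorted_wrt (<) ys \<and> (ys \<noteq> [] \<longrightarrow> last ys < hd ys + 1))"

definition lhd :: "(real \<Rightarrow> real \<Rightarrow> real) \<Rightarrow> real \<Rightarrow> real \<Rightarrow> real \<Rightarrow> real \<Rightarrow> int list \<Rightarrow> real set \<Rightarrow> bool" where
  "lhd F \<omega> L a M ns J \<longleftrightarrow>
     3 \<le> length ns \<and> comparable \<omega> L ns J \<and>
     (\<forall>\<theta>\<in>J. \<forall>xs. length xs = length ns \<and> (\<forall>i<length ns. inTW F \<omega> L a M (ns ! i) \<theta> (xs ! i))
        \<longrightarrow> cyc_order xs)"

definition Nset :: "real \<Rightarrow> real \<Rightarrow> real \<Rightarrow> int set" where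
  "Nset \<omega> L \<alpha> = {n. comparable \<omega> L [n] (Ialpha L \<alpha>)}"

definition closest_return :: "(real \<Rightarrow> real \<Rightarrow> real) \<Rightarrow> real \<Rightarrow> real \<Rightarrow> real \<Rightarrow> real \<Rightarrow> real \<Rightarrow> int \<Rightarrow> bool" where
  "closest_return F \<omega> L a M \<alpha> n \<longleftrightarrow> n \<in> Nset \<omega> L \<alpha> \<and>
     ((lhd F \<omega> L a M [-n, 0, n] (Ialpha L \<alpha>) \<and>
        \<not> (\<exists>k \<in> Nset \<omega> L \<alpha> - {0}. \<bar>k\<bar> < \<bar>n\<bar> \<and> lhd F \<omega> L a M [0, k, n] (Ialpha L \<alpha>)))
      \<or> (lhd F \<omega> L a M [n, 0, -n] (Ialpha L \<alpha>) \<and>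
        \<not> (\<exists>k \<in> Nset \<omega> L \<alpha> - {0}. \<bar>k\<bar> < \<bar>n\<bar> \<and> lhd F \<omega> L a M [n, k, 0] (Ialpha L \<alpha>))))"

end

theory Submission
  imports Defs
begin

(* Over a base point theta, the nonempty fibres of the sets T^m(W) are arcs of the circle, pairwise
   disjoint because W is wandering. After lifting the arcs to intervals, the cyclic order of points
   taken from three of them depends only on the integer parts of the differences of their centres.
   These integers stay constant while theta moves along a path over which the arcs exist, and the
   fibre maps of T^s, lifts of circle homeomorphisms, carry them from theta to theta + s omega.
   If s is comparable over I_alpha, then s omega lies within (1 - alpha) |I| / 2 of an integer, so
   theta + s omega is joined back to theta by a short path of this kind. Taking s = n, k, n + k
   identifies the data of -n, -k, 0 with those of 0, k, n, hence 0 <| k <| n iff -n <| -k <| 0.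
   A cyclic order of four points is the conjunction of two cyclic orders of three, which gives the
   four-term statement; closest return times are defined through three-term relations. *)

section \<open>Cyclic order on the circle\<close>

lemma mod1_eq_iff_diff_Ints: "mod1_eq x y \<longleftrightarrow> x - y \<in> \<int>"
  unfolding mod1_eq_def Ints_def by (auto simp: algebra_simps)

lemma mod1_eq_add_Ints:
  assumes "k \<in> \<int>"
  shows "mod1_eq (y + k) x \<longleftrightarrow> mod1_eq y x"
proof -
  have "y + k - x = (y - x) + k" "y - x = (y + k - x) - k" by simp_all
  then show ?thesis unfolding mod1_eq_iff_diff_Ints using assms by (metis Ints_add Ints_diff)
qed

lemma mod1_eq_sym: "mod1_eq x y \<Longrightarrow> mod1_eq y x"
  unfolding mod1_eq_iff_diff_Ints by (metis Ints_minus minus_diff_eq)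

lemma mod1_eq_trans:
  assumes "mod1_eq x y" "mod1_eq y z"
  shows "mod1_eq x z"
proof -
  have "x - z = (x - y) + (y - z)" by simp
  then show ?thesis using assms unfolding mod1_eq_iff_diff_Ints by (metis Ints_add)
qed

lemma cyc_order_iff_list_all2:
  "cyc_order xs \<longleftrightarrow>
     (\<exists>ys. list_all2 mod1_eq ys xs \<and> sorted_wrt (<) ys \<and> (ys \<noteq> [] \<longrightarrow> last ys < hd ys + 1))"
  unfolding cyc_order_def list_all2_conv_all_nth by auto

lemma sorted_wrt_less_imp_le_last:
  fixes ys :: "'a::linorder list"
  assumes "sorted_wrt (<) ys" "y \<in> set ys"
  shows "y \<le> last ys"
  using assms by (induction ys) (auto simp: less_imp_le)

lemma cyc_order_Cons_iff:
  "cyc_order (x # xs) \<longleftrightarrow>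
     (\<exists>y ys. mod1_eq y x \<and> list_all2 mod1_eq ys xs \<and> sorted_wrt (<) ys \<and> (\<forall>z\<in>set ys. y < z \<and> z < y + 1))"
  (is "_ \<longleftrightarrow> ?window")
proof -
  have window_iff: "sorted_wrt (<) (y # ys) \<and> last (y # ys) < y + 1 \<longleftrightarrow>
      sorted_wrt (<) ys \<and> (\<forall>z\<in>set ys. y < z \<and> z < y + 1)" for y :: real and ys
    using sorted_wrt_less_imp_le_last[of ys] by (cases "ys = []") (auto intro: le_less_trans)
  show ?thesis
  proof
    assume "cyc_order (x # xs)"
    then obtain y ys where "mod1_eq y x" "list_all2 mod1_eq ys xs"
      "sorted_wrt (<) (y # ys) \<and> last (y # ys) < y + 1"
      unfolding cyc_order_iff_list_all2 list_all2_Cons2 by auto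
    then show ?window unfolding window_iff by blast
  next
    assume ?window
    then obtain y ys where "mod1_eq y x" "list_all2 mod1_eq ys xs"
      "sorted_wrt (<) (y # ys) \<and> last (y # ys) < y + 1"
      unfolding window_iff[symmetric] by blast
    then show "cyc_order (x # xs)"
      unfolding cyc_order_iff_list_all2 by (intro exI[of _ "y # ys"]) auto
  qed
qed

lemma cyc_order_Cons_iff_frac:
  "cyc_order (x # xs) \<longleftrightarrow> sorted_wrt (<) (0 # map (\<lambda>z. frac (z - x)) xs)"
proof
  assume "cyc_order (x # xs)"
  then obtain y ys where rel: "mod1_eq y x" "list_all2 mod1_eq ys xs"
    and sorted: "sorted_wrt (<) ys" and window: "\<forall>z\<in>set ys. y < z \<and> z < y + 1"
    unfolding cyc_order_Cons_iff by blast
  have "map (\<lambda>z. frac (z - x)) xs = map (\<lambda>z. z - y) ys"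
  proof (rule nth_equalityI)
    show "length (map (\<lambda>z. frac (z - x)) xs) = length (map (\<lambda>z. z - y) ys)"
      using rel(2) by (simp add: list_all2_lengthD)
  next
    fix i assume "i < length (map (\<lambda>z. frac (z - x)) xs)"
    then have i: "i < length ys" "i < length xs" using rel(2) by (simp_all add: list_all2_lengthD)
    then have "(y - x) - (ys ! i - xs ! i) \<in> \<int>"
      using rel by (auto simp: list_all2_conv_all_nth mod1_eq_iff_diff_Ints)
    also have "(y - x) - (ys ! i - xs ! i) = (xs ! i - x) - (ys ! i - y)" by simp
    finally have "(xs ! i - x) - (ys ! i - y) \<in> \<int>" .
    moreover have "y < ys ! i" "ys ! i < y + 1" using window i by auto
    ultimately show "map (\<lambda>z. frac (z - x)) xs ! i = map (\<lambda>z. z - y) ys ! i"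
      using i by (simp add: frac_unique_iff)
  qed
  moreover have "sorted_wrt (<) (0 # map (\<lambda>z. z - y) ys)"
    using window sorted by (simp add: sorted_wrt_map)
  ultimately show "sorted_wrt (<) (0 # map (\<lambda>z. frac (z - x)) xs)" by simp
next
  assume sorted: "sorted_wrt (<) (0 # map (\<lambda>z. frac (z - x)) xs)"
  let ?ys = "map (\<lambda>z. x + frac (z - x)) xs"
  have "list_all2 mod1_eq ?ys xs"
    unfolding list_all2_map1 by (rule list_all2_refl) (simp add: mod1_eq_iff_diff_Ints frac_def)
  moreover have "sorted_wrt (<) ?ys" "\<forall>z\<in>set ?ys. x < z \<and> z < x + 1"
    using sorted by (auto simp: sorted_wrt_map frac_lt_1)
  moreover have "mod1_eq x x" by (simp add: mod1_eq_iff_diff_Ints)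
  ultimately show "cyc_order (x # xs)" unfolding cyc_order_Cons_iff by blast
qed

lemma cyc_order_rotate: "cyc_order (x # xs) \<longleftrightarrow> cyc_order (xs @ [x])"
proof
  assume "cyc_order (x # xs)"
  then obtain y ys where rel: "mod1_eq y x" "list_all2 mod1_eq ys xs"
    and sorted: "sorted_wrt (<) ys" and window: "\<forall>z\<in>set ys. y < z \<and> z < y + 1"
    unfolding cyc_order_Cons_iff by blast
  have "list_all2 mod1_eq (ys @ [y + 1]) (xs @ [x])"
    using rel mod1_eq_add_Ints[of 1 y x] by (intro list_all2_appendI) auto
  moreover have "sorted_wrt (<) (ys @ [y + 1])" using window sorted by (simp add: sorted_wrt_append)
  moreover have "last (ys @ [y + 1]) < hd (ys @ [y + 1]) + 1"
    using window by (cases ys) auto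
  ultimately show "cyc_order (xs @ [x])" unfolding cyc_order_iff_list_all2 by blast
next
  assume "cyc_order (xs @ [x])"
  then obtain ys z where rel: "list_all2 mod1_eq ys xs" "mod1_eq z x"
    and sorted: "sorted_wrt (<) (ys @ [z])" and wrap: "z < hd (ys @ [z]) + 1"
    unfolding cyc_order_iff_list_all2 list_all2_append2 by (auto simp: list_all2_Cons2)
  have "z - 1 < w \<and> w < z" if w: "w \<in> set ys" for w
  proof -
    obtain h t where ys: "ys = h # t" using w by (cases ys) auto
    have "h \<le> w" using sorted w unfolding ys by (auto simp: less_imp_le)
    then show ?thesis using sorted wrap w unfolding ys by (auto simp: sorted_wrt_append)
  qed
  moreover have "mod1_eq (z - 1) x" using rel(2) mod1_eq_add_Ints[of "-1" z x] by simp
  moreover have "sorted_wrt (<) ys" using sorted by (simp add: sorted_wrt_append)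
  ultimately show "cyc_order (x # xs)"
    unfolding cyc_order_Cons_iff using rel(1) by force
qed

lemma cyc_order_mod1_cong:
  assumes "list_all2 mod1_eq xs xs'"
  shows "cyc_order xs \<longleftrightarrow> cyc_order xs'"
proof -
  have "list_all2 mod1_eq ys xs \<longleftrightarrow> list_all2 mod1_eq ys xs'" for ys
    using assms unfolding list_all2_conv_all_nth by (metis mod1_eq_sym mod1_eq_trans)
  then show ?thesis unfolding cyc_order_iff_list_all2 by presburger
qed

lemma cyc_order_imp_distinct: "cyc_order xs \<Longrightarrow> distinct xs"
proof (cases xs)
  case (Cons x xs')
  assume "cyc_order xs"
  then have "distinct (map (\<lambda>z. frac (z - x)) (x # xs'))"
    unfolding Cons cyc_order_Cons_iff_frac by (auto simp: strict_sorted_iff image_iff)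
  then show ?thesis unfolding Cons distinct_map by blast
qed simp

lemma frac_less_iff_floor:
  assumes "v - u \<notin> \<int>"
  shows "frac u < frac v \<longleftrightarrow> \<lfloor>v\<rfloor> - \<lfloor>u\<rfloor> \<le> \<lfloor>v - u\<rfloor>"
proof -
  have "frac u < frac v \<longleftrightarrow> of_int (\<lfloor>v\<rfloor> - \<lfloor>u\<rfloor>) < v - u" by (simp add: frac_def) arith
  also have "\<dots> \<longleftrightarrow> \<lfloor>v\<rfloor> - \<lfloor>u\<rfloor> \<le> \<lfloor>v - u\<rfloor>"
    using assms by (metis Ints_of_int le_floor_iff order_le_less)
  finally show ?thesis .
qed

lemma cyc_order_3_iff_floor:
  assumes "y - x \<notin> \<int>" "z - y \<notin> \<int>"
  shows "cyc_order [x, y, z] \<longleftrightarrow> \<lfloor>z - x\<rfloor> - \<lfloor>y - x\<rfloor> \<le> \<lfloor>z - y\<rfloor>"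
proof -
  have "cyc_order [x, y, z] \<longleftrightarrow> 0 < frac (y - x) \<and> frac (y - x) < frac (z - x)"
    unfolding cyc_order_Cons_iff_frac by (auto simp del: frac_gt_0_iff)
  also have "\<dots> \<longleftrightarrow> \<lfloor>z - x\<rfloor> - \<lfloor>y - x\<rfloor> \<le> \<lfloor>z - y\<rfloor>"
    using assms frac_less_iff_floor[of "z - x" "y - x"] by simp
  finally show ?thesis .
qed

lemma cyc_order_4_iff: "cyc_order [w, x, y, z] \<longleftrightarrow> cyc_order [w, x, y] \<and> cyc_order [w, y, z]"
  by (auto simp: cyc_order_Cons_iff_frac)

section \<open>Lifts of circle homeomorphisms and integer parts\<close>

lemma periodic_of_int:
  fixes f :: "real \<Rightarrow> 'a"
  assumes "\<And>x. f (x + 1) = f x"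
  shows "f (x + of_int j) = f x"
proof (induction j arbitrary: x rule: int_induct[where k = 0])
  case (step1 i)
  then show ?case using assms[of "x + of_int i"] by (simp add: add.assoc)
next
  case (step2 i)
  then show ?case using assms[of "x + of_int (i - 1)"] by (simp add: add.assoc)
qed simp

lemma plus_of_int_of_plus_1:
  fixes h :: "real \<Rightarrow> real"
  assumes "\<And>x. h (x + 1) = h x + 1"
  shows "h (x + of_int j) = h x + of_int j"
  using periodic_of_int[of "\<lambda>x. h x - x" x j] assms by (simp add: algebra_simps)

definition circle_homeo_lift :: "(real \<Rightarrow> real) \<Rightarrow> bool" where
  "circle_homeo_lift h \<longleftrightarrow> strict_mono h \<and> surj h \<and> (\<forall>x (j::int). h (x + of_int j) = h x + of_int j)"

lemma circle_homeo_liftI: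
  assumes "strict_mono h" "continuous_on UNIV h" "\<And>x. h (x + 1) = h x + 1"
  shows "circle_homeo_lift h"
proof -
  have deg: "h (x + of_int j) = h x + of_int j" for x j using plus_of_int_of_plus_1 assms(3) by blast
  have "\<exists>x. h x = y" for y
  proof -
    define j where "j = \<lfloor>y - h 0\<rfloor>"
    have "h (of_int j) \<le> y" "y \<le> h (of_int (j + 1))"
      using deg[of 0 j] deg[of 0 "j + 1"] unfolding j_def by (simp_all, linarith+)
    moreover have "of_int j \<le> (of_int (j + 1) :: real)" by simp
    ultimately show ?thesis
      using IVT'[of h "of_int j" y "of_int (j + 1)"] continuous_on_subset[OF assms(2)] by blast
  qed
  then show ?thesis unfolding circle_homeo_lift_def using assms deg by (metis surjI)
qed

lemma circle_homeo_lift_bij: "circle_homeo_lift h \<Longrightarrow> bij h"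
  unfolding circle_homeo_lift_def bij_def using strict_mono_imp_inj_on by blast

lemma circle_homeo_lift_inv:
  assumes "circle_homeo_lift h"
  shows "circle_homeo_lift (inv h)"
proof -
  have h: "strict_mono h" "bij h" "\<And>x j. h (x + of_int j) = h x + of_int j"
    using assms circle_homeo_lift_bij unfolding circle_homeo_lift_def by blast+
  have "strict_mono (inv h)"
    unfolding strict_mono_def
    by (metis h(1,2) bij_inv_eq_iff not_less_iff_gr_or_eq strict_mono_less)
  moreover have "inv h (x + of_int j) = inv h x + of_int j" for x j
    using h(3)[of "inv h x" j] h(2) by (metis bij_inv_eq_iff bij_is_surj surj_f_inv_f)
  ultimately show ?thesis
    unfolding circle_homeo_lift_def using h(2) bij_betw_inv_into bij_is_surj by blast
qed

lemma floor_diff_circle_homeo_lift: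
  assumes h: "circle_homeo_lift h" and nonint: "y - x \<notin> \<int>"
  shows "\<lfloor>h y - h x\<rfloor> = \<lfloor>y - x\<rfloor>"
proof -
  define k where "k = \<lfloor>y - x\<rfloor>"
  have mono: "strict_mono h" and deg: "\<And>x j. h (x + of_int j) = h x + of_int j"
    using h unfolding circle_homeo_lift_def by blast+
  have "of_int k < y - x" "y - x < of_int (k + 1)"
    using nonint unfolding k_def by (metis Ints_of_int of_int_floor_le order_le_less, simp)
  then have "h (x + of_int k) < h y" "h y < h (x + of_int (k + 1))"
    using mono by (simp_all add: strict_mono_less)
  then show ?thesis unfolding k_def[symmetric] deg floor_eq_iff by simp
qed

lemma floor_constant_on_connected:
  fixes g :: "'a::topological_space \<Rightarrow> real"
  assumes S: "connected S" "continuous_on S g" "\<And>s. s \<in> S \<Longrightarrow> g s \<notin> \<int>"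
    and "x \<in> S" "y \<in> S"
  shows "\<lfloor>g x\<rfloor> = \<lfloor>g y\<rfloor>"
proof -
  have "\<lfloor>g u\<rfloor> \<le> \<lfloor>g v\<rfloor>" if "u \<in> S" "v \<in> S" for u v
  proof (rule ccontr)
    assume "\<not> \<lfloor>g u\<rfloor> \<le> \<lfloor>g v\<rfloor>"
    then have "g v \<le> of_int \<lfloor>g u\<rfloor>" "of_int \<lfloor>g u\<rfloor> \<le> g u" by linarith+
    moreover have "connected (g ` S)" using S by (intro connected_continuous_image)
    ultimately have "of_int \<lfloor>g u\<rfloor> \<in> g ` S"
      using that unfolding connected_iff_interval by blast
    then show False using S(3) by (metis Ints_of_int imageE)
  qed
  then show ?thesis using assms(4,5) by (meson order_antisym)
qed

section \<open>The fibres of the iterates of \<open>W\<close>\<close>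

lemma ex_of_int_shift: "(\<exists>i::int. P (x + of_int j - of_int i)) \<longleftrightarrow> (\<exists>i::int. P (x - of_int i))"
proof
  assume "\<exists>i::int. P (x + of_int j - of_int i)"
  then obtain i :: int where "P (x + of_int j - of_int i)" by blast
  then show "\<exists>i::int. P (x - of_int i)" by (intro exI[of _ "i - j"]) (simp add: algebra_simps)
next
  assume "\<exists>i::int. P (x - of_int i)"
  then obtain i :: int where "P (x - of_int i)" by blast
  then show "\<exists>i::int. P (x + of_int j - of_int i)" by (intro exI[of _ "i + j"]) (simp add: algebra_simps)
qed

lemma inW_add_int: "inW L a M (\<theta> + of_int i) (x + of_int j) \<longleftrightarrow> inW L a M \<theta> x"
  unfolding inW_def
  using ex_of_int_shift[of "\<lambda>t. \<bar>t\<bar> < L / 2"] ex_of_int_shift[of "\<lambda>y. a < y \<and> y < a + M"]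
  by presburger

locale wandering_skew_product =
  fixes F :: "real \<Rightarrow> real \<Rightarrow> real" and \<omega> L a M :: real
  assumes F_cont: "continuous_on UNIV (\<lambda>p. F (fst p) (snd p))"
    and F_per: "\<And>\<theta> x. F (\<theta> + 1) x = F \<theta> x"
    and F_deg: "\<And>\<theta> x. F \<theta> (x + 1) = F \<theta> x + 1"
    and F_mono: "\<And>\<theta>. strict_mono (F \<theta>)"
    and L_pos: "0 < L" and L_less: "L < 1 / 2"
    and M_pos: "0 < M"
    and wandering: "\<And>n::nat. 1 \<le> n \<Longrightarrow> \<not> (\<exists>\<theta> x. inW L a M \<theta> x \<and> inTW F \<omega> L a M (int n) \<theta> x)"
begin

lemma iter_lift_periodic: "iter_lift F \<omega> n (\<theta> + of_int j) = iter_lift F \<omega> n \<theta>"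
proof (induction n)
  case (Suc n)
  have "F (\<theta> + real n * \<omega> + of_int j) = F (\<theta> + real n * \<omega>)"
    using F_per by (intro periodic_of_int) (simp add: fun_eq_iff)
  then have "F (\<theta> + of_int j + real n * \<omega>) = F (\<theta> + real n * \<omega>)"
    by (simp add: algebra_simps)
  then show ?case using Suc by (simp add: fun_eq_iff)
qed (simp add: fun_eq_iff)

lemma iter_lift_add:
  "iter_lift F \<omega> (p + q) \<theta> = iter_lift F \<omega> q (\<theta> + real p * \<omega>) \<circ> iter_lift F \<omega> p \<theta>"
  by (induction q) (simp_all add: fun_eq_iff algebra_simps)

lemma continuous_on_iter_lift:
  "continuous_on UNIV (\<lambda>(\<theta>, x). iter_lift F \<omega> n \<theta> x)"
proof (induction n)
  case (Suc n)
  have "continuous_on UNIV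
      (\<lambda>p. (\<lambda>p. F (fst p) (snd p)) (fst p + real n * \<omega>, iter_lift F \<omega> n (fst p) (snd p)))"
    using Suc by (intro continuous_on_compose2[OF F_cont])
      (auto intro!: continuous_intros simp: case_prod_beta')
  then show ?case by (simp add: case_prod_beta')
qed (simp add: case_prod_beta' continuous_on_snd)

lemma circle_homeo_lift_iter_lift: "circle_homeo_lift (iter_lift F \<omega> n \<theta>)"
proof (rule circle_homeo_liftI)
  show "strict_mono (iter_lift F \<omega> n \<theta>)"
    by (induction n) (use F_mono in \<open>auto simp: strict_mono_def\<close>)
  have "continuous_on UNIV (\<lambda>x. (\<lambda>(\<theta>, x). iter_lift F \<omega> n \<theta> x) (\<theta>, x))"
    by (rule continuous_on_compose2[OF continuous_on_iter_lift]) (auto intro!: continuous_intros)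
  then show "continuous_on UNIV (iter_lift F \<omega> n \<theta>)" by simp
  show "iter_lift F \<omega> n \<theta> (x + 1) = iter_lift F \<omega> n \<theta> x + 1" for x
    by (induction n) (simp_all add: F_deg)
qed

(* T^m (theta, x) = (theta + m omega, fibre_map m theta x) modulo 1 in both coordinates, for every
   integer m. *)
definition fibre_map :: "int \<Rightarrow> real \<Rightarrow> real \<Rightarrow> real" where
  "fibre_map m \<theta> =
     (if 0 \<le> m then iter_lift F \<omega> (nat m) \<theta> else inv (iter_lift F \<omega> (nat (- m)) (\<theta> + of_int m * \<omega>)))"

lemma fibre_map_of_nat [simp]: "fibre_map (int n) \<theta> = iter_lift F \<omega> n \<theta>"
  by (simp add: fibre_map_def)

lemma circle_homeo_lift_fibre_map: "circle_homeo_lift (fibre_map m \<theta>)"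
  by (simp add: fibre_map_def circle_homeo_lift_iter_lift circle_homeo_lift_inv)

lemma fibre_map_add_nat:
  "fibre_map (p + int n) \<theta> = iter_lift F \<omega> n (\<theta> + of_int p * \<omega>) \<circ> fibre_map p \<theta>"
proof (cases "0 \<le> p")
  case True
  then have "fibre_map (p + int n) \<theta> = iter_lift F \<omega> (nat p + n) \<theta>"
    "fibre_map p \<theta> = iter_lift F \<omega> (nat p) \<theta>"
    by (simp_all add: fibre_map_def nat_add_distrib)
  then show ?thesis using iter_lift_add[of "nat p" n \<theta>] True by simp
next
  case False
  define P where "P = nat (- p)"
  define \<theta>' where "\<theta>' = \<theta> + of_int p * \<omega>"
  have \<theta>: "\<theta>' + real P * \<omega> = \<theta>" using False unfolding P_def \<theta>'_def by simp
  have bij: "bij (iter_lift F \<omega> k t)" for k t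
    by (rule circle_homeo_lift_bij[OF circle_homeo_lift_iter_lift])
  have fp: "fibre_map p \<theta> = inv (iter_lift F \<omega> P \<theta>')"
    using False unfolding fibre_map_def P_def \<theta>'_def by simp
  show ?thesis
  proof (cases "P \<le> n")
    case True
    have "iter_lift F \<omega> n \<theta>' = iter_lift F \<omega> (n - P) \<theta> \<circ> iter_lift F \<omega> P \<theta>'"
      using iter_lift_add[of P "n - P" \<theta>'] True by (simp add: \<theta>)
    moreover have "0 \<le> p + int n" "nat (p + int n) = n - P"
      using True False unfolding P_def by linarith+
    then have "fibre_map (p + int n) \<theta> = iter_lift F \<omega> (n - P) \<theta>"
      by (simp add: fibre_map_def)
    moreover have "surj (iter_lift F \<omega> P \<theta>')" using bij by (rule bij_is_surj)
    ultimately show ?thesis unfolding fp \<theta>'_def[symmetric] by (simp add: fun_eq_iff surj_f_inv_f)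
  next
    case False
    have "iter_lift F \<omega> P \<theta>' = iter_lift F \<omega> (P - n) (\<theta>' + real n * \<omega>) \<circ> iter_lift F \<omega> n \<theta>'"
      using iter_lift_add[of n "P - n" \<theta>'] False by simp
    then have "inv (iter_lift F \<omega> P \<theta>') =
        inv (iter_lift F \<omega> n \<theta>') \<circ> inv (iter_lift F \<omega> (P - n) (\<theta>' + real n * \<omega>))"
      using bij by (simp add: o_inv_distrib)
    moreover have "\<not> 0 \<le> p + int n" "nat (- (p + int n)) = P - n"
      using False \<open>\<not> 0 \<le> p\<close> unfolding P_def by linarith+
    then have "fibre_map (p + int n) \<theta> = inv (iter_lift F \<omega> (P - n) (\<theta>' + real n * \<omega>))"
      unfolding fibre_map_def \<theta>'_def by (simp add: algebra_simps)
    moreover have "surj (iter_lift F \<omega> n \<theta>')" using bij by (rule bij_is_surj)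
    ultimately show ?thesis unfolding fp \<theta>'_def[symmetric] by (simp add: fun_eq_iff surj_f_inv_f)
  qed
qed

lemma fibre_map_add: "fibre_map (p + q) \<theta> = fibre_map q (\<theta> + of_int p * \<omega>) \<circ> fibre_map p \<theta>"
proof (cases "0 \<le> q")
  case True
  then obtain n where "q = int n" using nonneg_int_cases by blast
  then show ?thesis using fibre_map_add_nat[of p n \<theta>] by simp
next
  case False
  define Q where "Q = nat (- q)"
  have "fibre_map p \<theta> = iter_lift F \<omega> Q (\<theta> + of_int (p + q) * \<omega>) \<circ> fibre_map (p + q) \<theta>"
    using fibre_map_add_nat[of "p + q" Q \<theta>] False unfolding Q_def by simp
  moreover have "fibre_map q (\<theta> + of_int p * \<omega>) = inv (iter_lift F \<omega> Q (\<theta> + of_int (p + q) * \<omega>))"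
    using False unfolding fibre_map_def Q_def by (simp add: algebra_simps)
  moreover have "inj (iter_lift F \<omega> Q (\<theta> + of_int (p + q) * \<omega>))"
    by (rule bij_is_inj[OF circle_homeo_lift_bij[OF circle_homeo_lift_iter_lift]])
  ultimately show ?thesis by (simp add: fun_eq_iff)
qed

lemma fibre_map_periodic: "fibre_map m (\<theta> + of_int j) = fibre_map m \<theta>"
  using iter_lift_periodic[of _ "\<theta> + of_int m * \<omega>" j]
  by (simp add: fibre_map_def iter_lift_periodic algebra_simps)

lemma fibre_map_zero [simp]: "fibre_map 0 \<theta> = id"
  using fibre_map_of_nat[of 0] by (simp add: fun_eq_iff)

lemma fibre_map_plus_of_int: "fibre_map m \<theta> (x + of_int j) = fibre_map m \<theta> x + of_int j"
  using circle_homeo_lift_fibre_map unfolding circle_homeo_lift_def by blast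

lemma fibre_map_uminus_cancel:
  "fibre_map (- m) \<theta> (fibre_map m (\<theta> - of_int m * \<omega>) x) = x"
  "fibre_map m (\<theta> - of_int m * \<omega>) (fibre_map (- m) \<theta> x) = x"
  using fibre_map_add[of m "- m" "\<theta> - of_int m * \<omega>"] fibre_map_add[of "- m" m \<theta>]
  by (simp_all add: fun_eq_iff)

definition comparable_at :: "int \<Rightarrow> real \<Rightarrow> bool" where
  "comparable_at m \<theta> \<longleftrightarrow> (\<exists>i::int. \<bar>\<theta> - of_int m * \<omega> - of_int i\<bar> < L / 2)"

lemma comparable_iff: "comparable \<omega> L ms J \<longleftrightarrow> (\<forall>\<theta>\<in>J. \<forall>m\<in>set ms. comparable_at m \<theta>)"
  by (simp add: comparable_def comparable_at_def)

lemma comparable_at_shift: "comparable_at (m + s) (\<theta> + of_int s * \<omega>) \<longleftrightarrow> comparable_at m \<theta>"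
  by (simp add: comparable_at_def algebra_simps)

lemma comparable_at_near:
  assumes "of_int m * \<omega> = \<delta> + of_int i" "\<bar>\<theta> - \<delta>\<bar> < L / 2"
  shows "comparable_at m \<theta>"
  unfolding comparable_at_def using assms by (intro exI[of _ "- i"]) simp

lemma comparable_at_on_segment:
  assumes "of_int m * \<omega> = \<delta> + of_int i" "\<bar>\<theta>1 - \<delta>\<bar> < L / 2" "\<bar>\<theta>2 - \<delta>\<bar> < L / 2"
    and "t \<in> closed_segment \<theta>1 \<theta>2"
  shows "comparable_at m t"
proof -
  have "closed_segment \<theta>1 \<theta>2 \<subseteq> ball \<delta> (L / 2)"
    using assms(2,3) by (intro closed_segment_subset) (auto simp: dist_real_def abs_minus_commute)
  then show ?thesis
    using assms(1,4) by (intro comparable_at_near) (auto simp: dist_real_def abs_minus_commute)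
qed

lemma comparable_at_uminus: "comparable_at (- m) (- \<theta>) \<longleftrightarrow> comparable_at m \<theta>"
proof -
  have "\<bar>- \<theta> - of_int (- m) * \<omega> - of_int (- i)\<bar> = \<bar>\<theta> - of_int m * \<omega> - of_int i\<bar>" for i
    by simp
  then show ?thesis unfolding comparable_at_def by (metis minus_minus)
qed

abbreviation in_fibre :: "int \<Rightarrow> real \<Rightarrow> real \<Rightarrow> bool" where
  "in_fibre m \<theta> x \<equiv> inTW F \<omega> L a M m \<theta> x"

lemma in_fibre_iff_inW: "in_fibre m \<theta> x \<longleftrightarrow> inW L a M (\<theta> - of_int m * \<omega>) (fibre_map (- m) \<theta> x)"
proof (cases "0 \<le> m")
  case True
  have "inW L a M (\<theta> - of_int m * \<omega>) (fibre_map (- m) \<theta> x)"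
    if W: "inW L a M \<theta>0 x0" and rel: "mod1_eq (\<theta>0 + of_int m * \<omega>) \<theta>" "mod1_eq (fibre_map m \<theta>0 x0) x"
    for \<theta>0 x0
  proof -
    obtain i j :: int
      where \<theta>0: "\<theta>0 = (\<theta> - of_int m * \<omega>) + of_int i" and "fibre_map m \<theta>0 x0 = x + of_int j"
      using rel unfolding mod1_eq_def by (auto simp: algebra_simps)
    then have "x0 = fibre_map (- m) \<theta> x + of_int j"
      using fibre_map_uminus_cancel(1)[of m \<theta> x0] by (simp add: fibre_map_periodic fibre_map_plus_of_int)
    then show ?thesis using W \<theta>0 inW_add_int by simp
  qed
  moreover have "mod1_eq (\<theta> - of_int m * \<omega> + of_int m * \<omega>) \<theta>"
    "mod1_eq (fibre_map m (\<theta> - of_int m * \<omega>) (fibre_map (- m) \<theta> x)) x"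
    by (simp_all add: fibre_map_uminus_cancel mod1_eq_iff_diff_Ints)
  moreover have "in_fibre m \<theta> x \<longleftrightarrow>
      (\<exists>\<theta>0 x0. inW L a M \<theta>0 x0 \<and> mod1_eq (\<theta>0 + of_int m * \<omega>) \<theta> \<and> mod1_eq (fibre_map m \<theta>0 x0) x)"
    using True by (simp add: inTW_def fibre_map_def)
  ultimately show ?thesis by blast
next
  case False
  then show ?thesis by (simp add: inTW_def fibre_map_def)
qed

definition fibre_box :: "int \<Rightarrow> real \<Rightarrow> real set" where
  "fibre_box m \<theta> = {x. a < fibre_map (- m) \<theta> x \<and> fibre_map (- m) \<theta> x < a + M}"

lemma in_fibre_iff: "in_fibre m \<theta> x \<longleftrightarrow> comparable_at m \<theta> \<and> (\<exists>j::int. x - of_int j \<in> fibre_box m \<theta>)"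
  using fibre_map_plus_of_int[of "- m" \<theta> x "- _"]
  by (simp add: in_fibre_iff_inW inW_def comparable_at_def fibre_box_def)

lemma in_fibre_add_int: "in_fibre m \<theta> (x + of_int j) \<longleftrightarrow> in_fibre m \<theta> x"
  unfolding in_fibre_iff using ex_of_int_shift[of "\<lambda>y. y \<in> fibre_box m \<theta>"] by simp

lemma convex_fibre_box: "convex (fibre_box m \<theta>)"
proof (rule is_interval_convex, unfold is_interval_1, intro ballI allI impI)
  fix x y z assume "x \<in> fibre_box m \<theta>" "y \<in> fibre_box m \<theta>" "x \<le> z \<and> z \<le> y"
  moreover have "mono (fibre_map (- m) \<theta>)"
    using circle_homeo_lift_fibre_map unfolding circle_homeo_lift_def by (blast intro: strict_mono_mono)
  ultimately have "fibre_map (- m) \<theta> x \<le> fibre_map (- m) \<theta> z" "fibre_map (- m) \<theta> z \<le> fibre_map (- m) \<theta> y"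
    by (auto dest: monoD)
  with \<open>x \<in> fibre_box m \<theta>\<close> \<open>y \<in> fibre_box m \<theta>\<close> show "z \<in> fibre_box m \<theta>"
    unfolding fibre_box_def by auto
qed

definition centre :: "int \<Rightarrow> real \<Rightarrow> real" where
  "centre m \<theta> = fibre_map m (\<theta> - of_int m * \<omega>) (a + M / 2)"

lemma centre_in_fibre_box: "centre m \<theta> \<in> fibre_box m \<theta>"
  using M_pos by (simp add: centre_def fibre_box_def fibre_map_uminus_cancel)

lemma in_fibre_centre: "comparable_at m \<theta> \<Longrightarrow> in_fibre m \<theta> (centre m \<theta>)"
  using centre_in_fibre_box[of m \<theta>] by (auto simp: in_fibre_iff intro: exI[of _ 0])

lemma in_fibre_unique:
  assumes "in_fibre p \<theta> x" "in_fibre q \<theta> x"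
  shows "p = q"
proof (rule ccontr)
  assume "p \<noteq> q"
  then obtain p q where pq: "p < q" "in_fibre p \<theta> x" "in_fibre q \<theta> x"
    using assms by (metis linorder_neqE)
  define n where "n = nat (q - p)"
  have n: "1 \<le> n" "q = p + int n" using pq(1) unfolding n_def by auto
  have "fibre_map (- int n) (\<theta> - of_int p * \<omega>) (fibre_map (- p) \<theta> x) = fibre_map (- q) \<theta> x"
    using fibre_map_add[of "- p" "- int n" \<theta>] n(2) by (simp add: fun_eq_iff add.commute)
  moreover have "\<theta> - of_int p * \<omega> - real n * \<omega> = \<theta> - of_int q * \<omega>"
    using n(2) by (simp add: algebra_simps)
  ultimately have "in_fibre (int n) (\<theta> - of_int p * \<omega>) (fibre_map (- p) \<theta> x)"
    using pq(3) unfolding in_fibre_iff_inW by (metis of_int_of_nat_eq)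
  then show False
    using wandering[OF n(1)] pq(2) unfolding in_fibre_iff_inW by blast
qed

lemma in_fibre_diff_not_Ints:
  assumes "p \<noteq> q" "in_fibre p \<theta> x" "in_fibre q \<theta> y"
  shows "y - x \<notin> \<int>"
proof
  assume "y - x \<in> \<int>"
  then obtain j where "y = x + of_int j"
    by (metis Ints_cases add_diff_cancel_left' add_diff_eq diff_add_cancel)
  then have "in_fibre q \<theta> x" using assms(3) in_fibre_add_int by simp
  then show False using assms(1,2) in_fibre_unique by blast
qed

definition fibre_gap :: "int \<Rightarrow> int \<Rightarrow> real \<Rightarrow> int" where
  "fibre_gap p q \<theta> = \<lfloor>centre q \<theta> - centre p \<theta>\<rfloor>"

lemma floor_diff_fibre_box:
  assumes "p \<noteq> q" "comparable_at p \<theta>" "comparable_at q \<theta>"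
    and "x \<in> fibre_box p \<theta>" "y \<in> fibre_box q \<theta>"
  shows "\<lfloor>y - x\<rfloor> = fibre_gap p q \<theta>"
proof -
  let ?S = "fibre_box p \<theta> \<times> fibre_box q \<theta>"
  have "snd z - fst z \<notin> \<int>" if "z \<in> ?S" for z
  proof -
    have "in_fibre p \<theta> (fst z)" "in_fibre q \<theta> (snd z)"
      using that assms(2,3) by (auto simp: in_fibre_iff intro: exI[of _ 0])
    then show ?thesis by (rule in_fibre_diff_not_Ints[OF assms(1)])
  qed
  moreover have "connected ?S" by (intro convex_connected convex_Times convex_fibre_box)
  moreover have "continuous_on ?S (\<lambda>z. snd z - fst z)" by (intro continuous_intros)
  ultimately show ?thesis
    using floor_constant_on_connected[of ?S "\<lambda>z. snd z - fst z" "(x, y)" "(centre p \<theta>, centre q \<theta>)"]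
      assms(4,5) centre_in_fibre_box by (simp add: fibre_gap_def)
qed

lemma cyc_order_in_fibres:
  assumes "distinct [p, q, r]" "in_fibre p \<theta> x" "in_fibre q \<theta> y" "in_fibre r \<theta> z"
  shows "cyc_order [x, y, z] \<longleftrightarrow> fibre_gap p r \<theta> - fibre_gap p q \<theta> \<le> fibre_gap q r \<theta>"
proof -
  obtain i j k :: int where box: "x - of_int i \<in> fibre_box p \<theta>" "y - of_int j \<in> fibre_box q \<theta>"
    "z - of_int k \<in> fibre_box r \<theta>" and comp: "comparable_at p \<theta>" "comparable_at q \<theta>" "comparable_at r \<theta>"
    using assms(2-4) unfolding in_fibre_iff by blast
  let ?x = "x - of_int i" and ?y = "y - of_int j" and ?z = "z - of_int k"
  have "in_fibre p \<theta> ?x" "in_fibre q \<theta> ?y" "in_fibre r \<theta> ?z"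
    using box comp by (auto simp: in_fibre_iff intro: exI[of _ 0])
  then have nonint: "?y - ?x \<notin> \<int>" "?z - ?y \<notin> \<int>"
    using assms(1) in_fibre_diff_not_Ints by auto
  have "list_all2 mod1_eq [x, y, z] [?x, ?y, ?z]" by (simp add: mod1_eq_def)
  then have "cyc_order [x, y, z] \<longleftrightarrow> cyc_order [?x, ?y, ?z]" by (rule cyc_order_mod1_cong)
  also have "\<dots> \<longleftrightarrow> \<lfloor>?z - ?x\<rfloor> - \<lfloor>?y - ?x\<rfloor> \<le> \<lfloor>?z - ?y\<rfloor>"
    using nonint by (rule cyc_order_3_iff_floor)
  also have "\<dots> \<longleftrightarrow> fibre_gap p r \<theta> - fibre_gap p q \<theta> \<le> fibre_gap q r \<theta>"
    using assms(1) floor_diff_fibre_box[OF _ comp(1,3) box(1,3)]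
      floor_diff_fibre_box[OF _ comp(1,2) box(1,2)] floor_diff_fibre_box[OF _ comp(2,3) box(2,3)]
    by simp
  finally show ?thesis .
qed

lemma centre_shift: "centre (m + s) (\<theta> + of_int s * \<omega>) = fibre_map s \<theta> (centre m \<theta>)"
proof -
  have "\<theta> + of_int s * \<omega> - of_int (m + s) * \<omega> = \<theta> - of_int m * \<omega>" by (simp add: algebra_simps)
  then have "centre (m + s) (\<theta> + of_int s * \<omega>) = fibre_map (m + s) (\<theta> - of_int m * \<omega>) (a + M / 2)"
    unfolding centre_def by (simp only:)
  then show ?thesis
    using fibre_map_add[of m s "\<theta> - of_int m * \<omega>"] by (simp add: centre_def)
qed

lemma fibre_gap_shift:
  assumes "p \<noteq> q" "comparable_at p \<theta>" "comparable_at q \<theta>"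
  shows "fibre_gap (p + s) (q + s) (\<theta> + of_int s * \<omega>) = fibre_gap p q \<theta>"
  using floor_diff_circle_homeo_lift[OF circle_homeo_lift_fibre_map
      in_fibre_diff_not_Ints[OF assms(1) in_fibre_centre[OF assms(2)] in_fibre_centre[OF assms(3)]]]
  by (simp add: fibre_gap_def centre_shift)

lemma fibre_gap_periodic: "fibre_gap p q (\<theta> + of_int j) = fibre_gap p q \<theta>"
proof -
  have "centre m (\<theta> + of_int j) = centre m \<theta>" for m
    using fibre_map_periodic[of m "\<theta> - of_int m * \<omega>" j] by (simp add: centre_def algebra_simps)
  then show ?thesis by (simp add: fibre_gap_def)
qed

lemma continuous_on_centre:
  assumes "0 \<le> m"
  shows "continuous_on UNIV (centre m)"
proof -
  have "continuous_on UNIV (\<lambda>\<theta>. (\<lambda>(\<theta>, x). iter_lift F \<omega> (nat m) \<theta> x) (\<theta> - of_int m * \<omega>, a + M / 2))"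
    by (rule continuous_on_compose2[OF continuous_on_iter_lift]) (auto intro!: continuous_intros)
  then show ?thesis using assms by (simp add: centre_def fibre_map_def)
qed

lemma fibre_gap_constant_on_segment:
  assumes "p \<noteq> q" and comp: "\<And>t. t \<in> closed_segment \<theta>1 \<theta>2 \<Longrightarrow> comparable_at p t \<and> comparable_at q t"
  shows "fibre_gap p q \<theta>1 = fibre_gap p q \<theta>2"
proof -
  \<comment> \<open>continuity of \<open>centre\<close> is only established for nonnegative times, hence the shift by \<open>s\<close>\<close>
  define s where "s = \<bar>p\<bar> + \<bar>q\<bar>"
  define g where "g t = centre (q + s) (t + of_int s * \<omega>) - centre (p + s) (t + of_int s * \<omega>)" for t
  have gap: "fibre_gap p q t = \<lfloor>g t\<rfloor>" if "t \<in> closed_segment \<theta>1 \<theta>2" for t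
    using fibre_gap_shift[OF assms(1)] comp[OF that] by (simp add: g_def fibre_gap_def)
  have "g t \<notin> \<int>" if "t \<in> closed_segment \<theta>1 \<theta>2" for t
    using comp[OF that] assms(1) unfolding g_def
    by (intro in_fibre_diff_not_Ints[of "p + s" "q + s" "t + of_int s * \<omega>"] in_fibre_centre)
      (auto simp: comparable_at_shift)
  moreover have "continuous_on (closed_segment \<theta>1 \<theta>2) g"
    unfolding g_def s_def
    by (intro continuous_intros continuous_on_compose2[OF continuous_on_centre]) auto
  ultimately have "\<lfloor>g \<theta>1\<rfloor> = \<lfloor>g \<theta>2\<rfloor>" by (intro floor_constant_on_connected) auto
  then show ?thesis by (simp add: gap)
qed

lemma fibre_gap_translate:
  assumes "p \<noteq> q" "of_int s * \<omega> = \<delta> + of_int i" "comparable_at p \<theta>" "comparable_at q \<theta>"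
    and "\<And>t. t \<in> closed_segment \<theta> (\<theta> + \<delta>) \<Longrightarrow> comparable_at (p + s) t \<and> comparable_at (q + s) t"
  shows "fibre_gap (p + s) (q + s) \<theta> = fibre_gap p q \<theta>"
proof -
  have "\<theta> + of_int s * \<omega> = \<theta> + \<delta> + of_int i" using assms(2) by simp
  then have "fibre_gap p q \<theta> = fibre_gap (p + s) (q + s) (\<theta> + \<delta> + of_int i)"
    using fibre_gap_shift[OF assms(1,3,4), of s] by (simp add: add.assoc)
  also have "\<dots> = fibre_gap (p + s) (q + s) (\<theta> + \<delta>)" by (rule fibre_gap_periodic)
  also have "\<dots> = fibre_gap (p + s) (q + s) \<theta>"
    using assms(1,5)
    by (intro fibre_gap_constant_on_segment[symmetric]) (auto simp: closed_segment_commute)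
  finally show ?thesis ..
qed

definition fibres_cyclic :: "int list \<Rightarrow> real \<Rightarrow> bool" where
  "fibres_cyclic ms \<theta> \<longleftrightarrow> (\<forall>xs. list_all2 (\<lambda>m x. in_fibre m \<theta> x) ms xs \<longrightarrow> cyc_order xs)"

lemma lhd_iff:
  "lhd F \<omega> L a M ms J \<longleftrightarrow>
     3 \<le> length ms \<and> (\<forall>\<theta>\<in>J. \<forall>m\<in>set ms. comparable_at m \<theta>) \<and> (\<forall>\<theta>\<in>J. fibres_cyclic ms \<theta>)"
  unfolding lhd_def comparable_iff fibres_cyclic_def list_all2_conv_all_nth by (auto simp: eq_commute)

lemma fibres_cyclic_Cons:
  "fibres_cyclic (m # ms) \<theta> \<longleftrightarrow>
     (\<forall>x xs. in_fibre m \<theta> x \<longrightarrow> list_all2 (\<lambda>m x. in_fibre m \<theta> x) ms xs \<longrightarrow> cyc_order (x # xs))"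
  unfolding fibres_cyclic_def list_all2_Cons1 by blast

lemma fibres_cyclic_snoc:
  "fibres_cyclic (ms @ [m]) \<theta> \<longleftrightarrow>
     (\<forall>x xs. in_fibre m \<theta> x \<longrightarrow> list_all2 (\<lambda>m x. in_fibre m \<theta> x) ms xs \<longrightarrow> cyc_order (xs @ [x]))"
proof -
  have list_all2_snoc: "list_all2 (\<lambda>m x. in_fibre m \<theta> x) (ms @ [m]) ys \<longleftrightarrow>
      (\<exists>x xs. ys = xs @ [x] \<and> in_fibre m \<theta> x \<and> list_all2 (\<lambda>m x. in_fibre m \<theta> x) ms xs)" for ys
  proof
    assume "\<exists>x xs. ys = xs @ [x] \<and> in_fibre m \<theta> x \<and> list_all2 (\<lambda>m x. in_fibre m \<theta> x) ms xs"
    then show "list_all2 (\<lambda>m x. in_fibre m \<theta> x) (ms @ [m]) ys" by (auto intro: list_all2_appendI)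
  qed (auto simp: list_all2_append1 list_all2_Cons1)
  show ?thesis unfolding fibres_cyclic_def list_all2_snoc by blast
qed

lemma fibres_cyclic_rotate: "fibres_cyclic (m # ms) \<theta> \<longleftrightarrow> fibres_cyclic (ms @ [m]) \<theta>"
  unfolding fibres_cyclic_Cons fibres_cyclic_snoc cyc_order_rotate ..

lemma fibres_cyclic_3:
  "fibres_cyclic [p, q, r] \<theta> \<longleftrightarrow>
     (\<forall>x y z. in_fibre p \<theta> x \<longrightarrow> in_fibre q \<theta> y \<longrightarrow> in_fibre r \<theta> z \<longrightarrow> cyc_order [x, y, z])"
proof -
  have list_all2_3: "list_all2 (\<lambda>m x. in_fibre m \<theta> x) [p, q, r] xs \<longleftrightarrow>
      (\<exists>x y z. xs = [x, y, z] \<and> in_fibre p \<theta> x \<and> in_fibre q \<theta> y \<and> in_fibre r \<theta> z)" for xs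
    by (auto simp: list_all2_Cons1)
  show ?thesis unfolding fibres_cyclic_def list_all2_3 by blast
qed

lemma fibres_cyclic_4:
  "fibres_cyclic [p, q, r, s] \<theta> \<longleftrightarrow>
     (\<forall>w x y z. in_fibre p \<theta> w \<longrightarrow> in_fibre q \<theta> x \<longrightarrow> in_fibre r \<theta> y \<longrightarrow> in_fibre s \<theta> z
        \<longrightarrow> cyc_order [w, x, y, z])"
proof -
  have list_all2_4: "list_all2 (\<lambda>m x. in_fibre m \<theta> x) [p, q, r, s] xs \<longleftrightarrow>
      (\<exists>w x y z. xs = [w, x, y, z] \<and> in_fibre p \<theta> w \<and> in_fibre q \<theta> x \<and> in_fibre r \<theta> y \<and> in_fibre s \<theta> z)"
    for xs
    by (auto simp: list_all2_Cons1)
  show ?thesis unfolding fibres_cyclic_def list_all2_4 by blast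
qed

lemma fibres_cyclic_3_iff:
  assumes "distinct [p, q, r]" "comparable_at p \<theta>" "comparable_at q \<theta>" "comparable_at r \<theta>"
  shows "fibres_cyclic [p, q, r] \<theta> \<longleftrightarrow> fibre_gap p r \<theta> - fibre_gap p q \<theta> \<le> fibre_gap q r \<theta>"
  using cyc_order_in_fibres[OF assms(1)] in_fibre_centre[OF assms(2)] in_fibre_centre[OF assms(3)]
    in_fibre_centre[OF assms(4)]
  unfolding fibres_cyclic_3 by blast

lemma fibres_cyclic_4_iff:
  assumes "comparable_at q \<theta>" "comparable_at s \<theta>"
  shows "fibres_cyclic [p, q, r, s] \<theta> \<longleftrightarrow> fibres_cyclic [p, q, r] \<theta> \<and> fibres_cyclic [p, r, s] \<theta>"
  using in_fibre_centre[OF assms(1)] in_fibre_centre[OF assms(2)]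
  unfolding fibres_cyclic_3 fibres_cyclic_4 cyc_order_4_iff by blast

lemma fibres_cyclic_imp_distinct:
  assumes "\<forall>m\<in>set ms. comparable_at m \<theta>" "fibres_cyclic ms \<theta>"
  shows "distinct ms"
proof -
  have "list_all2 (\<lambda>m x. in_fibre m \<theta> x) ms (map (\<lambda>m. centre m \<theta>) ms)"
    using assms(1) in_fibre_centre by (induction ms) auto
  then have "distinct (map (\<lambda>m. centre m \<theta>) ms)"
    using assms(2) cyc_order_imp_distinct unfolding fibres_cyclic_def by blast
  then show ?thesis by (simp add: distinct_map)
qed

lemma lhd_rotate: "lhd F \<omega> L a M (m # ms) J \<longleftrightarrow> lhd F \<omega> L a M (ms @ [m]) J"
  by (simp add: lhd_iff fibres_cyclic_rotate)

lemma lhd_4_iff: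
  "lhd F \<omega> L a M [p, q, r, s] J \<longleftrightarrow> lhd F \<omega> L a M [p, q, r] J \<and> lhd F \<omega> L a M [p, r, s] J"
  by (auto simp: lhd_iff fibres_cyclic_4_iff)

lemma lhd_imp_distinct: "lhd F \<omega> L a M ms J \<Longrightarrow> \<theta> \<in> J \<Longrightarrow> distinct ms"
  by (auto simp: lhd_iff intro: fibres_cyclic_imp_distinct)

end

section \<open>Comparability over \<open>I\<^sub>\<alpha>\<close>\<close>

lemma abs_le_of_interval_subset:
  fixes \<delta> r R :: real
  assumes "0 < r" "\<And>\<theta>. \<bar>\<theta>\<bar> < r \<Longrightarrow> \<bar>\<theta> - \<delta>\<bar> < R"
  shows "\<bar>\<delta>\<bar> \<le> R - r"
proof -
  have "r \<le> \<delta> + R"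
  proof (rule dense_le_bounded[of "- r"])
    fix w assume "- r < w" "w < r"
    then show "w \<le> \<delta> + R" using assms(2)[of w] unfolding abs_less_iff by linarith
  qed (use assms(1) in simp)
  moreover have "\<delta> - R \<le> - r"
  proof (rule dense_ge_bounded[of _ r])
    fix w assume "- r < w" "w < r"
    then show "\<delta> - R \<le> w" using assms(2)[of w] unfolding abs_less_iff by linarith
  qed (use assms(1) in simp)
  ultimately show ?thesis by (simp add: abs_le_iff)
qed

context wandering_skew_product
begin

lemma Nset_iff: "n \<in> Nset \<omega> L \<alpha> \<longleftrightarrow> (\<forall>\<theta>\<in>Ialpha L \<alpha>. comparable_at n \<theta>)"
  by (simp add: Nset_def comparable_iff)

lemma uminus_in_Nset:
  assumes "n \<in> Nset \<omega> L \<alpha>"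
  shows "- n \<in> Nset \<omega> L \<alpha>"
  unfolding Nset_iff
proof
  fix \<theta> assume "\<theta> \<in> Ialpha L \<alpha>"
  then have "- \<theta> \<in> Ialpha L \<alpha>" by (auto simp: Ialpha_def)
  then show "comparable_at (- n) \<theta>"
    using assms comparable_at_uminus[of n "- \<theta>"] unfolding Nset_iff by simp
qed

lemma zero_in_Nset:
  assumes "\<alpha> \<le> 1"
  shows "0 \<in> Nset \<omega> L \<alpha>"
proof -
  have "\<alpha> * L \<le> L" using assms L_pos by simp
  then show ?thesis
    unfolding Nset_iff Ialpha_def by (auto intro!: comparable_at_near[of 0 0 0])
qed

lemma Nset_near_integer:
  assumes "0 < \<alpha>" "\<alpha> \<le> 1" "n \<in> Nset \<omega> L \<alpha>"
  obtains \<delta> i where "of_int n * \<omega> = \<delta> + of_int i" "\<bar>\<delta>\<bar> \<le> (1 - \<alpha>) * L / 2"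
proof -
  have I: "\<theta> \<in> Ialpha L \<alpha> \<longleftrightarrow> \<bar>\<theta>\<bar> < \<alpha> * L / 2" for \<theta> by (auto simp: Ialpha_def)
  have "\<alpha> * L \<le> L" "0 < \<alpha> * L" using assms L_pos by simp_all
  then have "0 \<in> Ialpha L \<alpha>" unfolding I by simp
  then obtain i :: int where i: "\<bar>0 - of_int n * \<omega> - of_int i\<bar> < L / 2"
    using assms(3) unfolding Nset_iff comparable_at_def by blast
  define \<delta> where "\<delta> = of_int n * \<omega> + of_int i"
  have \<delta>: "of_int n * \<omega> = \<delta> + of_int (- i)" "\<bar>\<delta>\<bar> < L / 2"
    using i unfolding \<delta>_def by (simp_all add: abs_minus_commute add.commute)
  have "\<bar>\<theta> - \<delta>\<bar> < L / 2" if "\<bar>\<theta>\<bar> < \<alpha> * L / 2" for \<theta>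
  proof -
    have "\<theta> \<in> Ialpha L \<alpha>" using that I by blast
    then obtain j :: int where "\<bar>\<theta> - of_int n * \<omega> - of_int j\<bar> < L / 2"
      using assms(3) unfolding Nset_iff comparable_at_def by blast
    moreover have "\<theta> - of_int n * \<omega> - of_int j = (\<theta> - \<delta>) - of_int (j - i)" by (simp add: \<delta>_def)
    ultimately have j: "\<bar>(\<theta> - \<delta>) - of_int (j - i)\<bar> < L / 2" by simp
    have "-1 < real_of_int (j - i)" "real_of_int (j - i) < 1"
      using j \<delta>(2) that \<open>\<alpha> * L \<le> L\<close> L_less unfolding abs_less_iff by linarith+
    then have "j = i" by linarith
    then show ?thesis using j by simp
  qed
  then have "\<bar>\<delta>\<bar> \<le> L / 2 - \<alpha> * L / 2" using \<open>0 < \<alpha> * L\<close> by (intro abs_le_of_interval_subset) auto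
  then have "\<bar>\<delta>\<bar> \<le> (1 - \<alpha>) * L / 2" by (simp add: algebra_simps)
  with \<delta>(1) show thesis by (rule that)
qed

lemma fibres_cyclic_reflect:
  assumes \<alpha>: "0 < \<alpha>" "\<alpha> \<le> 1" and N: "n \<in> Nset \<omega> L \<alpha>" "k \<in> Nset \<omega> L \<alpha>"
    and dist: "distinct [0, k, n]" and \<theta>: "\<theta> \<in> Ialpha L \<alpha>"
  shows "fibres_cyclic [0, k, n] \<theta> \<longleftrightarrow> fibres_cyclic [- n, - k, 0] \<theta>"
proof -
  define B where "B = (1 - \<alpha>) * L / 2"
  obtain \<delta>n i\<^sub>n where n: "of_int n * \<omega> = \<delta>n + of_int i\<^sub>n" "\<bar>\<delta>n\<bar> \<le> B"
    using Nset_near_integer[OF \<alpha> N(1)] unfolding B_def .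
  obtain \<delta>k i\<^sub>k where k: "of_int k * \<omega> = \<delta>k + of_int i\<^sub>k" "\<bar>\<delta>k\<bar> \<le> B"
    using Nset_near_integer[OF \<alpha> N(2)] unfolding B_def .
  have zero: "of_int 0 * \<omega> = 0 + of_int 0" and "0 \<le> B" using \<alpha> L_pos by (simp_all add: B_def)
  have "L / 2 - B = \<alpha> * L / 2" by (simp add: B_def field_simps)
  then have "\<bar>\<theta>\<bar> < L / 2 - B" using \<theta> unfolding Ialpha_def by auto
  then have near: "\<bar>\<theta> + d\<bar> < L / 2" if "\<bar>d\<bar> \<le> B" for d
    using that unfolding abs_less_iff abs_le_iff by linarith
  have along: "comparable_at m t"
    if "of_int m * \<omega> = d + of_int j" "\<bar>d\<bar> \<le> B" "\<bar>\<delta> - d\<bar> \<le> B" "t \<in> closed_segment \<theta> (\<theta> + \<delta>)"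
    for m d j \<delta> t
    using comparable_at_on_segment[OF that(1) _ _ that(4)] near[of "- d"] near[of "\<delta> - d"] that(2,3)
    by (simp add: algebra_simps)
  have comp: "comparable_at m \<theta>" if "m \<in> {0, k, n, - k, - n}" for m
    using that \<theta> N uminus_in_Nset zero_in_Nset[OF \<alpha>(2)] unfolding Nset_iff by auto
  have "fibre_gap (- n + n) (0 + n) \<theta> = fibre_gap (- n) 0 \<theta>"
    using dist comp \<open>0 \<le> B\<close> n(2) by (intro fibre_gap_translate[OF _ n(1)] conjI)
      (auto intro: along[OF zero, of \<delta>n] along[OF n, of \<delta>n])
  moreover have "fibre_gap (- k + k) (0 + k) \<theta> = fibre_gap (- k) 0 \<theta>"
    using dist comp \<open>0 \<le> B\<close> k(2) by (intro fibre_gap_translate[OF _ k(1)] conjI)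
      (auto intro: along[OF zero, of \<delta>k] along[OF k, of \<delta>k])
  moreover have nk: "of_int (n + k) * \<omega> = (\<delta>n + \<delta>k) + of_int (i\<^sub>n + i\<^sub>k)"
    using n(1) k(1) by (simp add: algebra_simps)
  then have "fibre_gap (- n + (n + k)) (- k + (n + k)) \<theta> = fibre_gap (- n) (- k) \<theta>"
    using dist comp n(2) k(2) by (intro fibre_gap_translate[OF _ nk] conjI)
      (auto intro: along[OF k, of "\<delta>n + \<delta>k"] along[OF n, of "\<delta>n + \<delta>k"])
  ultimately have "fibre_gap (- n) 0 \<theta> = fibre_gap 0 n \<theta>" "fibre_gap (- k) 0 \<theta> = fibre_gap 0 k \<theta>"
    "fibre_gap (- n) (- k) \<theta> = fibre_gap k n \<theta>" by simp_all
  moreover have "distinct [- n, - k, 0]" using dist by auto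
  ultimately show ?thesis using dist comp by (simp add: fibres_cyclic_3_iff) linarith
qed

lemma lhd_reflect:
  assumes \<alpha>: "0 < \<alpha>" "\<alpha> \<le> 1"
  shows "lhd F \<omega> L a M [0, k, n] (Ialpha L \<alpha>) \<longleftrightarrow> lhd F \<omega> L a M [- n, - k, 0] (Ialpha L \<alpha>)"
    (is "?L \<longleftrightarrow> ?R")
proof (cases "?L \<or> ?R")
  case True
  have "0 \<in> Ialpha L \<alpha>" using \<alpha> L_pos by (simp add: Ialpha_def)
  have "n \<in> Nset \<omega> L \<alpha> \<and> k \<in> Nset \<omega> L \<alpha> \<and> distinct [0, k, n]"
    using True
  proof
    assume ?L
    moreover have "distinct [0, k, n]" using \<open>?L\<close> \<open>0 \<in> Ialpha L \<alpha>\<close> by (rule lhd_imp_distinct)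
    ultimately show ?thesis by (simp add: lhd_iff Nset_iff)
  next
    assume ?R
    moreover have "distinct [- n, - k, 0]" using \<open>?R\<close> \<open>0 \<in> Ialpha L \<alpha>\<close> by (rule lhd_imp_distinct)
    ultimately have "- n \<in> Nset \<omega> L \<alpha>" "- k \<in> Nset \<omega> L \<alpha>" "distinct [- n, - k, 0]"
      by (simp_all add: lhd_iff Nset_iff)
    then show ?thesis using uminus_in_Nset by fastforce
  qed
  then have N: "n \<in> Nset \<omega> L \<alpha>" "k \<in> Nset \<omega> L \<alpha>" and dist: "distinct [0, k, n]" by blast+
  have "\<forall>\<theta>\<in>Ialpha L \<alpha>. \<forall>m\<in>set [0, k, n]. comparable_at m \<theta>"
    "\<forall>\<theta>\<in>Ialpha L \<alpha>. \<forall>m\<in>set [- n, - k, 0]. comparable_at m \<theta>"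
    using N uminus_in_Nset zero_in_Nset[OF \<alpha>(2)] unfolding Nset_iff by auto
  then show ?thesis by (simp add: lhd_iff fibres_cyclic_reflect[OF \<alpha> N dist])
qed blast

lemma closest_return_uminus:
  assumes \<alpha>: "0 < \<alpha>" "\<alpha> \<le> 1" and cr: "closest_return F \<omega> L a M \<alpha> n"
  shows "closest_return F \<omega> L a M \<alpha> (- n)"
proof -
  let ?I = "Ialpha L \<alpha>" and ?N = "Nset \<omega> L \<alpha> - {0}"
  have N: "- k \<in> ?N" if "k \<in> ?N" for k using that uminus_in_Nset by auto
  have R1: "lhd F \<omega> L a M [- n, k, 0] ?I \<longleftrightarrow> lhd F \<omega> L a M [0, - k, n] ?I" for k
    using lhd_reflect[OF \<alpha>, of "- k" n] by simp
  have R2: "lhd F \<omega> L a M [0, k, - n] ?I \<longleftrightarrow> lhd F \<omega> L a M [n, - k, 0] ?I" for k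
    using lhd_reflect[OF \<alpha>, of k "- n"] by simp
  have "n \<in> Nset \<omega> L \<alpha>" using cr unfolding closest_return_def by blast
  moreover have "(lhd F \<omega> L a M [- n, 0, n] ?I \<and> \<not> (\<exists>k \<in> ?N. \<bar>k\<bar> < \<bar>n\<bar> \<and> lhd F \<omega> L a M [0, k, n] ?I))
      \<or> (lhd F \<omega> L a M [n, 0, - n] ?I \<and> \<not> (\<exists>k \<in> ?N. \<bar>k\<bar> < \<bar>n\<bar> \<and> lhd F \<omega> L a M [n, k, 0] ?I))"
    using cr unfolding closest_return_def by blast
  then have "(lhd F \<omega> L a M [n, 0, - n] ?I \<and> \<not> (\<exists>k \<in> ?N. \<bar>k\<bar> < \<bar>n\<bar> \<and> lhd F \<omega> L a M [0, k, - n] ?I))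
      \<or> (lhd F \<omega> L a M [- n, 0, n] ?I \<and> \<not> (\<exists>k \<in> ?N. \<bar>k\<bar> < \<bar>n\<bar> \<and> lhd F \<omega> L a M [- n, k, 0] ?I))"
    unfolding R1 R2 using N by (metis abs_minus_cancel)
  ultimately show ?thesis unfolding closest_return_def using uminus_in_Nset by auto
qed

end

theorem mainTheorem7:
  fixes F :: "real \<Rightarrow> real \<Rightarrow> real" and \<omega> L a M \<alpha> :: real
  assumes omega: "0 \<le> \<omega>" "\<omega> < 1" "\<omega> \<notin> \<rat>"
    and F_cont: "continuous_on UNIV (\<lambda>p. F (fst p) (snd p))"
    and F_per: "\<And>\<theta> x. F (\<theta> + 1) x = F \<theta> x"
    and F_deg: "\<And>\<theta> x. F \<theta> (x + 1) = F \<theta> x + 1"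
    and F_mono: "\<And>\<theta>. strict_mono (F \<theta>)"
    and I_len: "0 < L" "L < 1 / 2"
    and K_len: "0 < M" "M \<le> 1"
    and wandering: "\<And>n::nat. 1 \<le> n \<Longrightarrow> \<not> (\<exists>\<theta> x. inW L a M \<theta> x \<and> inTW F \<omega> L a M (int n) \<theta> x)"
    and alpha: "0 < \<alpha>" "\<alpha> \<le> 1"
  shows "(\<forall>n k::int.
            lhd F \<omega> L a M [-n, 0, k, n] (Ialpha L \<alpha>) \<longleftrightarrow> lhd F \<omega> L a M [-n, -k, 0, n] (Ialpha L \<alpha>))
         \<and> (\<forall>n::int. closest_return F \<omega> L a M \<alpha> n \<longrightarrow> closest_return F \<omega> L a M \<alpha> (-n))"
proof -
  interpret wandering_skew_product F \<omega> L a M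
    using F_cont F_per F_deg F_mono I_len K_len(1) wandering by unfold_locales
  let ?lhd = "\<lambda>ms. lhd F \<omega> L a M ms (Ialpha L \<alpha>)"
  have "?lhd [-n, 0, k, n] \<longleftrightarrow> ?lhd [-n, -k, 0, n]" for n k
  proof -
    have "?lhd [-n, 0, k, n] \<longleftrightarrow> ?lhd [0, k, n] \<and> ?lhd [0, n, -n]"
      using lhd_rotate[of "-n" "[0, k, n]"] lhd_4_iff[of 0 k n "-n"] by simp
    moreover have "?lhd [-n, -k, 0, n] \<longleftrightarrow> ?lhd [0, n, -n] \<and> ?lhd [0, -n, -k]"
      using lhd_rotate[of "-n" "[-k, 0, n]"] lhd_rotate[of "-k" "[0, n, -n]"] lhd_4_iff[of 0 n "-n" "-k"]
      by simp
    moreover have "?lhd [0, -n, -k] \<longleftrightarrow> ?lhd [0, k, n]"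
      using lhd_rotate[of 0 "[-n, -k]"] lhd_reflect[OF alpha, of k n] by simp
    ultimately show ?thesis by blast
  qed
  then show ?thesis using closest_return_uminus[OF alpha] by blast
qed

end
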